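(* There exists an absolute constant $c_1>0$ with the following property. Let $(m_n)$ and $(M_n)$ be sequences with $0<m_n\le M_n$ and $M_n/m_n=o(n)$ as $n\to\infty$. Then for all sufficiently large $n$, every $V\in\mathcal{L}_n(m_n,M_n)$ is invertible and \[ \bigl\|V^{-1}-S\bigr\|\le \frac{c_1 M_n^2}{m_n^3 (n-1)^2}, \] where $S=S(V)$ is the matrix associated with $V$ defined in the context.
   Context: For a matrix $A=(a_{i,j})$, $\|A\|:=\max_{i,j}|a_{i,j}|$. Class $\mathcal{L}_n(m,M)$: for $0<m\le M$, a $(2n-1)\times(2n-1)$ real symmetric matrix $V=(v_{i,j})$ belongs to $\mathcal{L}_n(m,M)$ if: (i) $v_{i,j}=0$ whenever $i\ne j$ and both $i,j\in\{1,\dots,n\}$, or both $i,j\in\{n+1,\dots,2n-1\}$; (ii) $v_{i,n+i}=v_{n+i,i}=0$ for $i=1,\dots,n-1$; (iii) $m\le v_{i,j}=v_{j,i}\le M$ for $i\in\{1,\dots,n\}$, $j\in\{n+1,\dots,2n-1\}$, $j\neq n+i$; (iv) $m\le v_{i,i}-\sum_{j=n+1}^{2n-1}v_{i,j}\le M$ for $i=1,\dots,n-1$, and $v_{n,n}=\sum_{j=n+1}^{2n-1}v_{n,j}$; (v) $v_{i,i}=\sum_{k=1}^n v_{k,i}$ for $i=n+1,\dots,2n-1$. Associated quantities: $v_{2n,i}=v_{i,2n}:=v_{i,i}-\sum_{j=1,j\ne i}^{2n-1}v_{i,j}$ for $i=1,\dots,2n-1$, and $v_{2n,2n}:=\sum_{i=1}^{2n-1}v_{2n,i}$.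 The $(2n-1)\times(2n-1)$ matrix $S=(s_{i,j})$ is defined by $s_{i,j}=\delta_{i,j}/v_{i,i}+1/v_{2n,2n}$ if $i,j\in\{1,\dots,n\}$ or $i,j\in\{n+1,\dots,2n-1\}$, and $s_{i,j}=-1/v_{2n,2n}$ if one of $i,j$ lies in $\{1,\dots,n\}$ and the other in $\{n+1,\dots,2n-1\}$; here $\delta_{i,j}$ is the Kronecker delta. *)

theory Defs
  imports "Jordan_Normal_Form.Matrix" "HOL-Library.Landau_Symbols"
begin

text \<open>1-based access to the entries of a matrix (the paper indexes from 1).\<close>
definition ent :: "real mat \<Rightarrow> nat \<Rightarrow> nat \<Rightarrow> real" where
  "ent V i j = V $$ (i - 1, j - 1)"

definition maxnorm :: "real mat \<Rightarrow> real" where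
  "maxnorm A = Max {\<bar>A $$ (i, j)\<bar> | i j. i < dim_row A \<and> j < dim_col A}"

definition in_L :: "nat \<Rightarrow> real \<Rightarrow> real \<Rightarrow> real mat \<Rightarrow> bool" where
  "in_L n m M V \<longleftrightarrow>
     0 < m \<and> m \<le> M \<and>
     V \<in> carrier_mat (2*n - 1) (2*n - 1) \<and> transpose_mat V = V \<and>
     (\<forall>i\<in>{1..n}. \<forall>j\<in>{1..n}. i \<noteq> j \<longrightarrow> ent V i j = 0) \<and>
     (\<forall>i\<in>{n+1..2*n-1}. \<forall>j\<in>{n+1..2*n-1}. i \<noteq> j \<longrightarrow> ent V i j = 0) \<and>
     (\<forall>i\<in>{1..n-1}. ent V i (n+i) = 0 \<and> ent V (n+i) i = 0) \<and>
     (\<forall>i\<in>{1..n}. \<forall>j\<in>{n+1..2*n-1}. j \<noteq> n + i \<longrightarrow>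
         m \<le> ent V i j \<and> ent V i j = ent V j i \<and> ent V i j \<le> M) \<and>
     (\<forall>i\<in>{1..n-1}. m \<le> ent V i i - (\<Sum>j=n+1..2*n-1. ent V i j) \<and>
                     ent V i i - (\<Sum>j=n+1..2*n-1. ent V i j) \<le> M) \<and>
     ent V n n = (\<Sum>j=n+1..2*n-1. ent V n j) \<and>
     (\<forall>i\<in>{n+1..2*n-1}. ent V i i = (\<Sum>k=1..n. ent V k i))"

text \<open>v_{2n,i} for i = 1..2n-1, and v_{2n,2n}.\<close>
definition vlast :: "nat \<Rightarrow> real mat \<Rightarrow> nat \<Rightarrow> real" where
  "vlast n V i = ent V i i - (\<Sum>j\<in>{1..2*n-1} - {i}. ent V i j)"

definition vcorner :: "nat \<Rightarrow> real mat \<Rightarrow> real" where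
  "vcorner n V = (\<Sum>i=1..2*n-1. vlast n V i)"

text \<open>The matrix S (1-based entries s_{i,j}), and as a matrix (0-based storage).\<close>
definition s_ent :: "nat \<Rightarrow> real mat \<Rightarrow> nat \<Rightarrow> nat \<Rightarrow> real" where
  "s_ent n V i j =
     (if (i \<le> n \<and> j \<le> n) \<or> (n < i \<and> n < j)
      then (if i = j then 1 / ent V i i else 0) + 1 / vcorner n V
      else - 1 / vcorner n V)"

definition S_mat :: "nat \<Rightarrow> real mat \<Rightarrow> real mat" where
  "S_mat n V = mat (2*n - 1) (2*n - 1) (\<lambda>(i, j). s_ent n V (i + 1) (j + 1))"

end

theory Submission
  imports Defs "Jordan_Normal_Form.Determinant"
begin

(* For V in L_n(m,M) split the indices into the blocks A = {1..n} and
   B = {n+1..2n-1}.  After the sign change x_k -> +x_k on A and -x_k on B, a linear system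
   V x = y becomes a "bipartite averaging" system: every value on A is a defective average
   of the values on B and vice versa, up to an error H relative to the diagonal.  The
   file first proves a maximum principle for such systems: the solution is bounded once
   a weighted mean on A (weights v_{2n,i}) is controlled and any two rows of A share a
   fraction kappa of their mass, because this overlap makes the oscillation on A contract.  With y = 0 it shows that
   V has trivial kernel, hence is invertible; applied column by column to the residual
   I - V S of the approximate inverse S it bounds W - S entrywise by 33 M^2/(m^3 (n-1)^2)
   for every n >= 5. *)

section \<open>A maximum principle for bipartite averaging systems\<close>

lemma weighted_average_range:
  fixes c f :: "'a \<Rightarrow> real"
  assumes c_nonneg: "\<And>i. i \<in> I \<Longrightarrow> 0 \<le> c i"
    and d_pos: "0 < d" and d_eq: "d = (\<Sum>i\<in>I. c i)"
    and eq: "d * x = (\<Sum>i\<in>I. c i * f i) + h" and h: "\<bar>h\<bar> \<le> H * d"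
    and range: "\<And>i. i \<in> I \<Longrightarrow> lo \<le> f i \<and> f i \<le> hi"
  shows "lo - H \<le> x \<and> x \<le> hi + H"
proof -
  have "(\<Sum>i\<in>I. c i * f i) \<le> (\<Sum>i\<in>I. c i * hi)"
    using c_nonneg range by (intro sum_mono mult_left_mono) auto
  also have "\<dots> = d * hi" by (simp add: d_eq sum_distrib_right)
  finally have up: "d * x \<le> d * (hi + H)"
    using eq h by (simp add: algebra_simps abs_le_iff)
  have "d * lo = (\<Sum>i\<in>I. c i * lo)" by (simp add: d_eq sum_distrib_right)
  also have "\<dots> \<le> (\<Sum>i\<in>I. c i * f i)"
    using c_nonneg range by (intro sum_mono mult_left_mono) auto
  finally have low: "d * (lo - H) \<le> d * x"
    using eq h by (simp add: algebra_simps abs_le_iff)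
  show ?thesis using up low d_pos by (simp add: mult_le_cancel_left_pos)
qed

lemma weighted_mean_bounds:
  fixes w f :: "'a \<Rightarrow> real"
  assumes w_nonneg: "\<And>i. i \<in> I \<Longrightarrow> 0 \<le> w i"
    and w_pos: "0 < (\<Sum>i\<in>I. w i)"
    and mean: "\<bar>\<Sum>i\<in>I. w i * f i\<bar> \<le> T * (\<Sum>i\<in>I. w i)"
    and range: "\<And>i. i \<in> I \<Longrightarrow> lo \<le> f i \<and> f i \<le> hi"
  shows "lo \<le> T \<and> - T \<le> hi"
proof -
  have "lo * (\<Sum>i\<in>I. w i) = (\<Sum>i\<in>I. w i * lo)" by (simp add: sum_distrib_left mult.commute)
  also have "\<dots> \<le> (\<Sum>i\<in>I. w i * f i)"
    using w_nonneg range by (intro sum_mono mult_left_mono) auto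
  also have "\<dots> \<le> T * (\<Sum>i\<in>I. w i)" using mean by (simp add: abs_le_iff)
  finally have "lo \<le> T" using w_pos by (simp add: mult_le_cancel_right_pos)
  have "(- T) * (\<Sum>i\<in>I. w i) \<le> (\<Sum>i\<in>I. w i * f i)" using mean by (simp add: abs_le_iff)
  also have "\<dots> \<le> (\<Sum>i\<in>I. w i * hi)"
    using w_nonneg range by (intro sum_mono mult_left_mono) auto
  also have "\<dots> = hi * (\<Sum>i\<in>I. w i)" by (simp add: sum_distrib_left mult.commute)
  finally have "- T \<le> hi" using w_pos by (rule mult_right_le_imp_le)
  with \<open>lo \<le> T\<close> show ?thesis by simp
qed

lemma overlap_contraction:
  fixes p q g :: "'a \<Rightarrow> real"
  assumes p_mass: "(\<Sum>l\<in>B. p l) \<le> 1" and q_mass: "(\<Sum>l\<in>B. q l) \<le> 1"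
    and overlap: "\<kappa> \<le> (\<Sum>l\<in>B. min (p l) (q l))"
    and g: "\<And>l. l \<in> B \<Longrightarrow> - L \<le> g l \<and> g l \<le> U" and U: "0 \<le> U" and L: "0 \<le> L"
  shows "(\<Sum>l\<in>B. p l * g l) - (\<Sum>l\<in>B. q l * g l) \<le> (1 - \<kappa>) * (U + L)"
proof -
  define r where "r l = min (p l) (q l)" for l
  have "(\<Sum>l\<in>B. (p l - r l) * g l) \<le> (\<Sum>l\<in>B. (p l - r l) * U)"
    using g by (intro sum_mono mult_left_mono) (auto simp: r_def)
  also have "\<dots> = ((\<Sum>l\<in>B. p l) - (\<Sum>l\<in>B. r l)) * U"
    by (simp only: sum_subtractf[symmetric] sum_distrib_right)
  also have "\<dots> \<le> (1 - \<kappa>) * U"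
    using p_mass overlap U by (intro mult_right_mono) (auto simp: r_def)
  finally have p_part: "(\<Sum>l\<in>B. (p l - r l) * g l) \<le> (1 - \<kappa>) * U" .
  have "- ((1 - \<kappa>) * L) \<le> - (((\<Sum>l\<in>B. q l) - (\<Sum>l\<in>B. r l)) * L)"
    using q_mass overlap L by (simp add: r_def mult_right_mono)
  also have "\<dots> = (\<Sum>l\<in>B. (q l - r l) * (- L))"
    by (simp only: sum_subtractf[symmetric] sum_distrib_right sum_negf[symmetric] mult_minus_right)
  also have "\<dots> \<le> (\<Sum>l\<in>B. (q l - r l) * g l)"
    using g by (intro sum_mono mult_left_mono) (auto simp: r_def)
  finally have q_part: "- ((1 - \<kappa>) * L) \<le> (\<Sum>l\<in>B. (q l - r l) * g l)" .
  have "(\<Sum>l\<in>B. p l * g l) - (\<Sum>l\<in>B. q l * g l)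
      = (\<Sum>l\<in>B. (p l - r l) * g l) - (\<Sum>l\<in>B. (q l - r l) * g l)"
    by (simp add: sum_subtractf[symmetric] algebra_simps)
  with p_part q_part show ?thesis by (simp add: algebra_simps)
qed

lemma oscillation_from_overlap:
  fixes p q g :: "'a \<Rightarrow> real"
  assumes hi: "hi = (\<Sum>l\<in>B. p l * g l) + e" and lo: "lo = (\<Sum>l\<in>B. q l * g l) + e'"
    and e: "\<bar>e\<bar> \<le> H" and e': "\<bar>e'\<bar> \<le> H"
    and p_mass: "(\<Sum>l\<in>B. p l) \<le> 1" and q_mass: "(\<Sum>l\<in>B. q l) \<le> 1"
    and overlap: "\<kappa> \<le> (\<Sum>l\<in>B. min (p l) (q l))"
    and g: "\<And>l. l \<in> B \<Longrightarrow> lo - H \<le> g l \<and> g l \<le> hi + H"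
    and lo_T: "lo \<le> T" and hi_T: "- T \<le> hi"
    and \<kappa>: "0 < \<kappa>" and H: "0 \<le> H" and T: "0 \<le> T"
  shows "hi - lo \<le> (4 * H + 2 * T) / \<kappa>"
proof -
  have g_range: "- (H + T - lo) \<le> g l \<and> g l \<le> hi + H + T" if "l \<in> B" for l
    using g[OF that] T by auto
  have "(\<Sum>l\<in>B. p l * g l) - (\<Sum>l\<in>B. q l * g l) \<le> (1 - \<kappa>) * ((hi + H + T) + (H + T - lo))"
    using p_mass q_mass overlap g_range lo_T hi_T H T by (intro overlap_contraction) auto
  then have "hi - lo \<le> (1 - \<kappa>) * ((hi + H + T) + (H + T - lo)) + 2 * H"
    using hi lo abs_le_D1[OF e] abs_le_D2[OF e'] by linarith
  then have "\<kappa> * (hi - lo) \<le> (1 - \<kappa>) * (2 * H + 2 * T) + 2 * H"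
    by (simp add: algebra_simps)
  also have "\<dots> \<le> 4 * H + 2 * T" using \<kappa> H T by (simp add: algebra_simps)
  finally show ?thesis using \<kappa> by (simp add: pos_le_divide_eq mult.commute)
qed

lemma bipartite_max_principle:
  fixes c :: "'a \<Rightarrow> 'a \<Rightarrow> real" and dl d f h :: "'a \<Rightarrow> real"
  assumes fin: "finite A" and A_ne: "A \<noteq> {}"
    and d_A: "\<And>i. i \<in> A \<Longrightarrow> d i = (\<Sum>l\<in>B. c i l) + dl i"
    and d_B: "\<And>l. l \<in> B \<Longrightarrow> d l = (\<Sum>i\<in>A. c i l)"
    and c_nonneg: "\<And>i l. i \<in> A \<Longrightarrow> l \<in> B \<Longrightarrow> 0 \<le> c i l"
    and dl_nonneg: "\<And>i. i \<in> A \<Longrightarrow> 0 \<le> dl i"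
    and d_pos: "\<And>k. k \<in> A \<union> B \<Longrightarrow> 0 < d k"
    and eq_A: "\<And>i. i \<in> A \<Longrightarrow> d i * f i - (\<Sum>l\<in>B. c i l * f l) = h i"
    and eq_B: "\<And>l. l \<in> B \<Longrightarrow> d l * f l - (\<Sum>i\<in>A. c i l * f i) = h l"
    and h: "\<And>k. k \<in> A \<union> B \<Longrightarrow> \<bar>h k\<bar> \<le> H * d k"
    and dl_pos: "0 < (\<Sum>i\<in>A. dl i)"
    and mean: "\<bar>\<Sum>i\<in>A. dl i * f i\<bar> \<le> T * (\<Sum>i\<in>A. dl i)"
    and overlap: "\<And>i i'. i \<in> A \<Longrightarrow> i' \<in> A \<Longrightarrow> i \<noteq> i' \<Longrightarrow>
                    \<kappa> \<le> (\<Sum>l\<in>B. min (c i l / d i) (c i' l / d i'))"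
    and \<kappa>: "0 < \<kappa>" and H: "0 \<le> H" and T: "0 \<le> T"
    and k: "k \<in> A \<union> B"
  shows "\<bar>f k\<bar> \<le> T + H + (4 * H + 2 * T) / \<kappa>"
proof -
  define lo hi where "lo = Min (f ` A)" and "hi = Max (f ` A)"
  have A_range: "lo \<le> f i \<and> f i \<le> hi" if "i \<in> A" for i
    using fin that by (auto simp: lo_def hi_def)
  obtain i_lo where i_lo: "i_lo \<in> A" "f i_lo = lo"
    using fin A_ne Min_in[of "f ` A"] unfolding lo_def by fastforce
  obtain i_hi where i_hi: "i_hi \<in> A" "f i_hi = hi"
    using fin A_ne Max_in[of "f ` A"] unfolding hi_def by fastforce
  have lo_hi: "lo \<le> T \<and> - T \<le> hi"
    using dl_nonneg dl_pos mean A_range by (rule weighted_mean_bounds)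
  (* the values on B are averages of the values on A *)
  have B_range: "lo - H \<le> f l \<and> f l \<le> hi + H" if l: "l \<in> B" for l
    using c_nonneg[OF _ l] d_pos[of l] d_B[OF l] _ h[of l] A_range l
    by (intro weighted_average_range[where f = f and h = "h l"]) (use eq_B[OF l] in auto)
  have A_average: "f i = (\<Sum>l\<in>B. c i l / d i * f l) + h i / d i" if i: "i \<in> A" for i
    using eq_A[OF i] d_pos[of i] i
    by (simp add: field_simps sum_divide_distrib[symmetric] sum_distrib_left)
  have mass: "(\<Sum>l\<in>B. c i l / d i) \<le> 1" if i: "i \<in> A" for i
    using d_A[OF i] dl_nonneg[OF i] d_pos[of i] i by (simp add: sum_divide_distrib[symmetric])
  have h_rel: "\<bar>h i / d i\<bar> \<le> H" if i: "i \<in> A" for i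
  proof -
    have "\<bar>h i / d i\<bar> = \<bar>h i\<bar> / d i" using d_pos[of i] i by simp
    also have "\<dots> \<le> H" using h[of i] d_pos[of i] i by (simp add: divide_le_eq)
    finally show ?thesis .
  qed
  have oscillation: "hi - lo \<le> (4 * H + 2 * T) / \<kappa>"
  proof (cases "i_hi = i_lo")
    case True
    then show ?thesis using i_lo i_hi H T \<kappa> by simp
  next
    case False
    show ?thesis
    proof (rule oscillation_from_overlap)
      show "hi = (\<Sum>l\<in>B. c i_hi l / d i_hi * f l) + h i_hi / d i_hi"
        using A_average i_hi by auto
      show "lo = (\<Sum>l\<in>B. c i_lo l / d i_lo * f l) + h i_lo / d i_lo"
        using A_average i_lo by auto
    qed (use h_rel mass i_hi i_lo overlap[OF i_hi(1) i_lo(1) False] B_range lo_hi \<kappa> H T in auto)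
  qed
  have "lo - H \<le> f k \<and> f k \<le> hi + H"
    using k A_range[of k] B_range[of k] H by fastforce
  then show ?thesis using lo_hi oscillation H by (simp add: abs_le_iff)
qed

lemma ent_mult_mat_vec:
  assumes A: "A \<in> carrier_mat N N" and v: "v \<in> carrier_vec N" and k: "k \<in> {1..N}"
  shows "(A *\<^sub>v v) $ (k - 1) = (\<Sum>t=1..N. ent A k t * v $ (t - 1))"
proof -
  have "(A *\<^sub>v v) $ (k - 1) = (\<Sum>i<N. A $$ (k - 1, i) * v $ i)"
    using A v k by (auto simp: scalar_prod_def atLeast0LessThan)
  also have "\<dots> = (\<Sum>t=1..N. ent A k t * v $ (t - 1))"
    by (simp add: ent_def sum.atLeast1_atMost_eq)
  finally show ?thesis .
qed

lemma ent_mult_mat: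
  assumes A: "A \<in> carrier_mat N N" and B: "B \<in> carrier_mat N N"
    and k: "k \<in> {1..N}" and j: "j \<in> {1..N}"
  shows "ent (A * B) k j = (\<Sum>t=1..N. ent A k t * ent B t j)"
proof -
  have "ent (A * B) k j = (\<Sum>i<N. A $$ (k - 1, i) * B $$ (i, j - 1))"
    using A B k j by (auto simp: ent_def scalar_prod_def atLeast0LessThan)
  also have "\<dots> = (\<Sum>t=1..N. ent A k t * ent B t j)"
    by (simp add: ent_def sum.atLeast1_atMost_eq)
  finally show ?thesis .
qed

lemma maxnorm_le:
  assumes dims: "0 < dim_row A" "0 < dim_col A"
    and entries: "\<And>i j. i < dim_row A \<Longrightarrow> j < dim_col A \<Longrightarrow> \<bar>A $$ (i, j)\<bar> \<le> c"
  shows "maxnorm A \<le> c"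
proof -
  let ?X = "{\<bar>A $$ (i, j)\<bar> | i j. i < dim_row A \<and> j < dim_col A}"
  have "?X \<subseteq> (\<lambda>(i, j). \<bar>A $$ (i, j)\<bar>) ` ({..<dim_row A} \<times> {..<dim_col A})" by auto
  then have "finite ?X" by (rule finite_subset) auto
  moreover have "?X \<noteq> {}" using dims by blast
  ultimately show ?thesis unfolding maxnorm_def using entries by (intro Max.boundedI) auto
qed

section \<open>Elementary properties of the class L_n(m,M)\<close>

definition excess :: "nat \<Rightarrow> real mat \<Rightarrow> nat \<Rightarrow> real" where
  "excess n V i = ent V i i - (\<Sum>j=n+1..2*n-1. ent V i j)"

(* +1 on the first block, -1 on the second: conjugating V by this diagonal sign matrix
   turns V x = y into a bipartite averaging system. *)
definition side_sign :: "nat \<Rightarrow> nat \<Rightarrow> real" where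
  "side_sign n k = (if k \<le> n then 1 else - 1)"

lemma sum_blocks:
  fixes n :: nat
  assumes "1 \<le> n"
  shows "(\<Sum>t=1..2*n-1. g t) = (\<Sum>t=1..n. g t) + (\<Sum>t=n+1..2*n-1. g t)"
proof -
  have "2 * n - 1 = n + (n - 1)" using assms by simp
  then show ?thesis using sum.ub_add_nat[of 1 n g "n - 1"] by simp
qed

(* A fixed matrix of L_n(m,M).  The bound n >= 5 guarantees that any two rows of the
   first block have many common columns (lemma row_overlap). *)
locale L_matrix =
  fixes n :: nat and m M :: real and V :: "real mat"
  assumes in_L: "in_L n m M V" and n_ge_5: "5 \<le> n"
begin

lemma m_pos: "0 < m" and m_le_M: "m \<le> M" and carrier: "V \<in> carrier_mat (2*n-1) (2*n-1)"
  using in_L unfolding in_L_def by auto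

lemma M_pos: "0 < M"
  using m_pos m_le_M by simp

lemma ent_sym:
  assumes i: "i \<in> {1..2*n-1}" and j: "j \<in> {1..2*n-1}"
  shows "ent V i j = ent V j i"
proof -
  have "ent V i j = transpose_mat V $$ (i - 1, j - 1)"
    using in_L unfolding in_L_def ent_def by simp
  also have "\<dots> = V $$ (j - 1, i - 1)" using i j carrier by (subst index_transpose_mat) auto
  finally show ?thesis unfolding ent_def .
qed

lemma first_block_zero: "i \<in> {1..n} \<Longrightarrow> j \<in> {1..n} \<Longrightarrow> i \<noteq> j \<Longrightarrow> ent V i j = 0"
  and second_block_zero:
    "i \<in> {n+1..2*n-1} \<Longrightarrow> j \<in> {n+1..2*n-1} \<Longrightarrow> i \<noteq> j \<Longrightarrow> ent V i j = 0"
  and matched_zero: "i \<in> {1..n-1} \<Longrightarrow> ent V i (n+i) = 0"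
  and cross_bounds:
    "i \<in> {1..n} \<Longrightarrow> j \<in> {n+1..2*n-1} \<Longrightarrow> j \<noteq> n + i \<Longrightarrow> m \<le> ent V i j \<and> ent V i j \<le> M"
  and excess_bounds: "i \<in> {1..n-1} \<Longrightarrow> m \<le> excess n V i \<and> excess n V i \<le> M"
  and excess_last: "excess n V n = 0"
  and diag_second: "i \<in> {n+1..2*n-1} \<Longrightarrow> ent V i i = (\<Sum>k=1..n. ent V k i)"
  using in_L unfolding in_L_def excess_def by auto

lemma excess_range:
  assumes i: "i \<in> {1..n}"
  shows "0 \<le> excess n V i \<and> excess n V i \<le> M"
proof (cases "i = n")
  case False
  then have "i \<in> {1..n-1}" using i by auto
  then show ?thesis using excess_bounds[of i] m_pos by auto
qed (use excess_last M_pos in simp)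

lemma offdiag_range:
  assumes k: "k \<in> {1..2*n-1}" and t: "t \<in> {1..2*n-1}" and kt: "k \<noteq> t"
  shows "0 \<le> ent V k t \<and> ent V k t \<le> M"
proof -
  have cross: "0 \<le> ent V a b \<and> ent V a b \<le> M" if "a \<in> {1..n}" "b \<in> {n+1..2*n-1}" for a b
    using cross_bounds[OF that] matched_zero[of a] that m_pos M_pos by (cases "b = n + a") auto
  consider "k \<le> n" "t \<le> n" | "k \<le> n" "n < t" | "n < k" "t \<le> n" | "n < k" "n < t"
    by linarith
  then show ?thesis
  proof cases
    case 3 then show ?thesis using cross[of t k] ent_sym[OF k t] k t by auto
  qed (use first_block_zero[of k t] second_block_zero[of k t] cross[of k t] k t kt M_pos in auto)
qed

lemma row_sum_first:
  assumes k: "k \<in> {1..2*n-1}"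
  shows "(\<Sum>t=1..n. ent V k t) = ent V k k"
proof (cases "k \<le> n")
  case True
  then have "(\<Sum>t=1..n. ent V k t) = (\<Sum>t=1..n. if t = k then ent V k k else 0)"
    using first_block_zero[of k] k by (intro sum.cong) auto
  then show ?thesis using True k by simp
next
  case False
  then have "(\<Sum>t=1..n. ent V k t) = (\<Sum>t=1..n. ent V t k)"
    using k by (intro sum.cong refl ent_sym) auto
  then show ?thesis using diag_second[of k] False k by simp
qed

lemma row_sum_second:
  assumes k: "k \<in> {1..2*n-1}"
  shows "(\<Sum>t=n+1..2*n-1. ent V k t) = ent V k k - (if k \<le> n then excess n V k else 0)"
proof (cases "k \<le> n")
  case False
  then have "(\<Sum>t=n+1..2*n-1. ent V k t) = (\<Sum>t=n+1..2*n-1. if t = k then ent V k k else 0)"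
    using second_block_zero[of k] k by (intro sum.cong) auto
  then show ?thesis using False k by simp
qed (simp add: excess_def)

lemma row_first_diag: "k \<in> {1..n} \<Longrightarrow> (\<Sum>t=1..n. ent V k t * g t) = ent V k k * g k"
  using first_block_zero[of k]
  by (subst sum.cong[OF refl, where h = "\<lambda>t. if t = k then ent V k k * g k else 0"]) auto

lemma row_second_diag:
  "k \<in> {n+1..2*n-1} \<Longrightarrow> (\<Sum>t=n+1..2*n-1. ent V k t * g t) = ent V k k * g k"
  using second_block_zero[of k]
  by (subst sum.cong[OF refl, where h = "\<lambda>t. if t = k then ent V k k * g k else 0"]) auto

lemma vlast_eq:
  assumes k: "k \<in> {1..2*n-1}"
  shows "vlast n V k = (if k \<le> n then excess n V k else 0)"
proof -
  have "vlast n V k = ent V k k - ((\<Sum>j=1..2*n-1. ent V k j) - ent V k k)"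
    unfolding vlast_def using k by (subst sum_diff1) auto
  then show ?thesis
    using sum_blocks[of n "ent V k"] row_sum_first[OF k] row_sum_second[OF k] n_ge_5 by simp
qed

lemma signed_row_sum:
  assumes k: "k \<in> {1..2*n-1}"
  shows "(\<Sum>t=1..2*n-1. side_sign n t * ent V k t) = vlast n V k"
proof -
  have "(\<Sum>t=1..2*n-1. side_sign n t * ent V k t)
      = (\<Sum>t=1..n. ent V k t) - (\<Sum>t=n+1..2*n-1. ent V k t)"
    using sum_blocks[of n "\<lambda>t. side_sign n t * ent V k t"] n_ge_5
    by (simp add: side_sign_def sum_negf)
  then show ?thesis using row_sum_first[OF k] row_sum_second[OF k] vlast_eq[OF k] by simp
qed

lemma vcorner_eq: "vcorner n V = (\<Sum>i=1..n. excess n V i)"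
proof -
  have "vcorner n V = (\<Sum>i=1..2*n-1. if i \<le> n then excess n V i else 0)"
    unfolding vcorner_def by (intro sum.cong refl vlast_eq)
  then show ?thesis using sum_blocks[of n "\<lambda>i. if i \<le> n then excess n V i else 0"] n_ge_5
    by simp
qed

lemma vcorner_lower: "(real n - 1) * m \<le> vcorner n V"
proof -
  have "real (card {1..n-1}) * m \<le> (\<Sum>i=1..n-1. excess n V i)"
    using excess_bounds by (intro sum_bounded_below) auto
  moreover have "(\<Sum>i=1..n. excess n V i) = (\<Sum>i=1..n-1. excess n V i) + excess n V n"
    using n_ge_5 sum.cl_ivl_Suc[of "excess n V" 1 "n - 1"] by simp
  ultimately show ?thesis using vcorner_eq excess_last n_ge_5 by simp
qed

lemma vcorner_pos: "0 < vcorner n V"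
proof -
  have "0 < (real n - 1) * m" using n_ge_5 m_pos by simp
  then show ?thesis using vcorner_lower by linarith
qed

lemma diag_lower:
  assumes k: "k \<in> {1..2*n-1}"
  shows "(real n - 1) * m \<le> ent V k k"
proof -
  consider "k = n" | "k \<in> {1..n-1}" | "k \<in> {n+1..2*n-1}" using k by fastforce
  then show ?thesis
  proof cases
    case 1
    have "real (card {n+1..2*n-1}) * m \<le> (\<Sum>t=n+1..2*n-1. ent V k t)"
      using cross_bounds[of k] 1 n_ge_5 by (intro sum_bounded_below) auto
    then show ?thesis using row_sum_second[OF k] excess_last 1 n_ge_5 by simp
  next
    case 2
    let ?B' = "{n+1..2*n-1} - {n+k}"
    have "real (card ?B') * m \<le> (\<Sum>t\<in>?B'. ent V k t)"
      using cross_bounds[of k] 2 by (intro sum_bounded_below) auto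
    also have "\<dots> \<le> (\<Sum>t=n+1..2*n-1. ent V k t)"
      using offdiag_range[of k] k by (intro sum_mono2) auto
    finally have "real (card ?B') * m \<le> (\<Sum>t=n+1..2*n-1. ent V k t)" .
    moreover have "card ?B' = n - 2" using 2 by (subst card_Diff_singleton) auto
    moreover have "k \<le> n" using 2 by auto
    ultimately have "(real n - 2) * m \<le> ent V k k - excess n V k"
      using row_sum_second[OF k] 2 n_ge_5 by (simp add: of_nat_diff)
    then show ?thesis using excess_bounds[OF 2] by (simp add: algebra_simps)
  next
    case 3
    let ?A' = "{1..n} - {k-n}"
    have "real (card ?A') * m \<le> (\<Sum>t\<in>?A'. ent V t k)"
      using cross_bounds 3 by (intro sum_bounded_below) auto
    also have "\<dots> \<le> (\<Sum>t=1..n. ent V t k)"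
      using offdiag_range[of _ k] 3 by (intro sum_mono2) auto
    moreover have "card ?A' = n - 1" using 3 by (subst card_Diff_singleton) auto
    ultimately show ?thesis using diag_second[OF 3] n_ge_5 by (simp add: of_nat_diff)
  qed
qed

lemma diag_pos:
  assumes "k \<in> {1..2*n-1}"
  shows "0 < ent V k k"
proof -
  have "0 < (real n - 1) * m" using n_ge_5 m_pos by simp
  then show ?thesis using diag_lower[OF assms] by linarith
qed

lemma diag_upper_first:
  assumes k: "k \<in> {1..n}"
  shows "ent V k k \<le> real n * M"
proof -
  have "(\<Sum>t=n+1..2*n-1. ent V k t) \<le> real (card {n+1..2*n-1}) * M"
    using offdiag_range[of k] k by (intro sum_bounded_above) auto
  moreover have "k \<in> {1..2*n-1}" using k by auto
  ultimately show ?thesis using row_sum_second[of k] excess_range[OF k] k n_ge_5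
    by (simp add: algebra_simps)
qed

(* Any two rows of the first block, normalised by their diagonals, share mass at least
   m/(3M) in the second block: each has at least n - 3 common columns carrying weight
   at least m/(nM). *)
lemma row_overlap:
  assumes i: "i \<in> {1..n}" and i': "i' \<in> {1..n}"
  shows "m / (3*M) \<le> (\<Sum>l=n+1..2*n-1. min (ent V i l / ent V i i) (ent V i' l / ent V i' i'))"
proof -
  let ?B = "{n+1..2*n-1}"
  let ?X = "?B - {n+i, n+i'}"
  let ?q = "\<lambda>l. min (ent V i l / ent V i i) (ent V i' l / ent V i' i')"
  have weight: "m / (real n * M) \<le> ent V a l / ent V a a"
    if a: "a \<in> {1..n}" and l: "l \<in> ?B" "l \<noteq> n + a" for a l
  proof (rule frac_le)
    show "m \<le> ent V a l" using cross_bounds[OF a l] by simp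
    show "ent V a a \<le> real n * M" using diag_upper_first[OF a] .
    show "0 < ent V a a" using diag_pos[of a] a by auto
  qed (use m_pos cross_bounds[OF a l] in auto)
  have "real (card ?X) * (m / (real n * M)) \<le> (\<Sum>l\<in>?X. ?q l)"
    using weight[OF i] weight[OF i'] by (intro sum_bounded_below) auto
  also have "\<dots> \<le> (\<Sum>l\<in>?B. ?q l)"
  proof (rule sum_mono2)
    show "0 \<le> ?q l" if "l \<in> ?B - ?X" for l
      using offdiag_range[of i l] offdiag_range[of i' l] that i i' diag_pos[of i] diag_pos[of i']
      by auto
  qed auto
  finally have sum_ge: "real (card ?X) * (m / (real n * M)) \<le> (\<Sum>l\<in>?B. ?q l)" .
  have "card ?B - card {n+i, n+i'} \<le> card ?X" by (rule diff_card_le_card_Diff) auto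
  moreover have "card {n+i, n+i'} \<le> 2" by (simp add: card_insert_if)
  moreover have "card ?B = n - 1" by simp
  ultimately have "n - 3 \<le> card ?X" by linarith
  then have card_X: "real n - 3 \<le> real (card ?X)" using n_ge_5 by linarith
  have weight_nonneg: "0 \<le> m / (real n * M)" using m_pos M_pos by simp
  have "m / (3*M) = (m / (real n * M)) * (real n / 3)" using n_ge_5 M_pos by (simp add: field_simps)
  also have "\<dots> \<le> (m / (real n * M)) * real (card ?X)"
    using card_X n_ge_5 by (intro mult_left_mono weight_nonneg) auto
  finally show ?thesis using sum_ge by (simp add: mult.commute)
qed

section \<open>A priori bound for the linear system V x = y\<close>

(* Multiplying the k-th equation by its sign and summing, symmetry of V turns the
   coefficient of x_t into the signed row sum v_{2n,t}: the excess-weighted sum of x on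
   the first block equals the signed sum of the right-hand side. *)
lemma signed_excess_identity:
  assumes eq: "\<And>k. k \<in> {1..2*n-1} \<Longrightarrow> (\<Sum>t=1..2*n-1. ent V k t * x t) = y k"
  shows "(\<Sum>i=1..n. excess n V i * x i) = (\<Sum>k=1..2*n-1. side_sign n k * y k)"
proof -
  have "(\<Sum>k=1..2*n-1. side_sign n k * y k)
      = (\<Sum>k=1..2*n-1. \<Sum>t=1..2*n-1. side_sign n k * ent V k t * x t)"
    by (intro sum.cong refl) (simp add: eq[symmetric] sum_distrib_left mult.assoc)
  also have "\<dots> = (\<Sum>t=1..2*n-1. \<Sum>k=1..2*n-1. side_sign n k * ent V k t * x t)"
    by (rule sum.swap)
  also have "\<dots> = (\<Sum>t=1..2*n-1. vlast n V t * x t)"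
  proof (rule sum.cong[OF refl])
    fix t assume t: "t \<in> {1..2*n-1}"
    have "(\<Sum>k=1..2*n-1. side_sign n k * ent V k t * x t)
        = (\<Sum>k=1..2*n-1. side_sign n k * ent V t k) * x t"
      unfolding sum_distrib_right using t ent_sym by (intro sum.cong refl) auto
    then show "(\<Sum>k=1..2*n-1. side_sign n k * ent V k t * x t) = vlast n V t * x t"
      using signed_row_sum[OF t] by simp
  qed
  also have "\<dots> = (\<Sum>t=1..2*n-1. (if t \<le> n then excess n V t else 0) * x t)"
    by (intro sum.cong refl) (simp add: vlast_eq)
  also have "\<dots> = (\<Sum>i=1..n. excess n V i * x i)"
    using sum_blocks[of n "\<lambda>t. (if t \<le> n then excess n V t else 0) * x t"] n_ge_5 by simp
  finally show ?thesis by simp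
qed

lemma solution_bound:
  assumes eq: "\<And>k. k \<in> {1..2*n-1} \<Longrightarrow> (\<Sum>t=1..2*n-1. ent V k t * x t) = y k"
    and y: "\<And>k. k \<in> {1..2*n-1} \<Longrightarrow> \<bar>y k\<bar> \<le> H * ent V k k"
    and signed_sum: "\<bar>\<Sum>k=1..2*n-1. side_sign n k * y k\<bar> \<le> T * vcorner n V"
    and H: "0 \<le> H" and T: "0 \<le> T"
    and k: "k \<in> {1..2*n-1}"
  shows "\<bar>x k\<bar> \<le> T + H + (4 * H + 2 * T) / (m / (3 * M))"
proof -
  let ?A = "{1..n}" and ?B = "{n+1..2*n-1}" and ?s = "side_sign n"
  have blocks: "?A \<union> ?B = {1..2*n-1}" using n_ge_5 by auto
  have sign_A: "?s i = 1" if "i \<in> ?A" for i using that by (simp add: side_sign_def)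
  have sign_B: "?s i = - 1" if "i \<in> ?B" for i using that by (simp add: side_sign_def)
  have abs_sign: "\<bar>?s i * z\<bar> = \<bar>z\<bar>" for i z by (simp add: side_sign_def abs_mult)
  have eq_blocks: "(\<Sum>t=1..n. ent V k t * x t) + (\<Sum>t=n+1..2*n-1. ent V k t * x t) = y k"
    if "k \<in> {1..2*n-1}" for k
    using eq[OF that] sum_blocks[of n "\<lambda>t. ent V k t * x t"] n_ge_5 by simp
  have "\<bar>?s k * x k\<bar> \<le> T + H + (4 * H + 2 * T) / (m / (3 * M))"
  proof (rule bipartite_max_principle[where A = ?A and B = ?B and c = "ent V"
        and dl = "excess n V" and d = "\<lambda>k. ent V k k" and h = "\<lambda>k. ?s k * y k"])
    show "ent V i i = (\<Sum>l\<in>?B. ent V i l) + excess n V i" for i by (simp add: excess_def)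
    show "ent V l l = (\<Sum>i\<in>?A. ent V i l)" if "l \<in> ?B" for l using diag_second that by simp
    show "0 \<le> ent V i l" if "i \<in> ?A" "l \<in> ?B" for i l using offdiag_range[of i l] that by auto
    show "0 < ent V k k" if "k \<in> ?A \<union> ?B" for k using diag_pos that blocks by auto
    show "ent V i i * (?s i * x i) - (\<Sum>l\<in>?B. ent V i l * (?s l * x l)) = ?s i * y i"
      if i: "i \<in> ?A" for i
    proof -
      have "i \<in> {1..2*n-1}" using i n_ge_5 by auto
      then show ?thesis using eq_blocks[of i] row_first_diag[OF i, of x] sign_A[OF i] sign_B
        by (simp add: sum_negf)
    qed
    show "ent V l l * (?s l * x l) - (\<Sum>i\<in>?A. ent V i l * (?s i * x i)) = ?s l * y l"
      if l: "l \<in> ?B" for l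
    proof -
      have "(\<Sum>i\<in>?A. ent V i l * (?s i * x i)) = (\<Sum>i\<in>?A. ent V l i * x i)"
        using sign_A l ent_sym by (intro sum.cong refl) auto
      then show ?thesis using eq_blocks[of l] row_second_diag[OF l, of x] sign_B[OF l] l by auto
    qed
    show "\<bar>?s k * y k\<bar> \<le> H * ent V k k" if "k \<in> ?A \<union> ?B" for k
      using y[of k] that blocks abs_sign by auto
    show "0 < (\<Sum>i\<in>?A. excess n V i)" using vcorner_pos vcorner_eq by simp
    have "(\<Sum>i\<in>?A. excess n V i * (?s i * x i)) = (\<Sum>i=1..n. excess n V i * x i)"
      using sign_A by (intro sum.cong refl) auto
    then show "\<bar>\<Sum>i\<in>?A. excess n V i * (?s i * x i)\<bar> \<le> T * (\<Sum>i\<in>?A. excess n V i)"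
      using signed_excess_identity[OF eq] signed_sum vcorner_eq by simp
    show "m / (3 * M) \<le> (\<Sum>l\<in>?B. min (ent V i l / ent V i i) (ent V i' l / ent V i' i'))"
      if "i \<in> ?A" "i' \<in> ?A" for i i' using row_overlap that by simp
  qed (use excess_range m_pos M_pos H T k blocks n_ge_5 in auto)
  then show ?thesis using abs_sign by simp
qed

lemma kernel_trivial:
  assumes eq: "\<And>k. k \<in> {1..2*n-1} \<Longrightarrow> (\<Sum>t=1..2*n-1. ent V k t * x t) = 0"
    and k: "k \<in> {1..2*n-1}"
  shows "x k = 0"
  using solution_bound[where y = "\<lambda>_. 0" and H = 0 and T = 0, OF eq _ _ _ _ k]
    diag_pos vcorner_pos by simp

theorem invertible: "invertible_mat V"
proof -
  have "det V \<noteq> 0"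
  proof
    assume "det V = 0"
    then obtain v where v: "v \<in> carrier_vec (2*n-1)" "v \<noteq> 0\<^sub>v (2*n-1)" "V *\<^sub>v v = 0\<^sub>v (2*n-1)"
      using det_0_iff_vec_prod_zero[OF carrier] by auto
    have "(\<Sum>t=1..2*n-1. ent V k t * v $ (t - 1)) = 0" if k: "k \<in> {1..2*n-1}" for k
      using ent_mult_mat_vec[OF carrier v(1) k] v(3) k by auto
    then have coord_zero: "v $ (t - 1) = 0" if "t \<in> {1..2*n-1}" for t
      using kernel_trivial[where x = "\<lambda>t. v $ (t - 1)"] that by blast
    have "v $ i = 0" if "i < 2*n-1" for i using coord_zero[of "i + 1"] that by simp
    then have "v = 0\<^sub>v (2*n-1)" using v(1) by (intro eq_vecI) auto
    with v(2) show False ..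
  qed
  then obtain B where "B \<in> carrier_mat (2*n-1) (2*n-1)" "B * V = 1\<^sub>m (2*n-1)" "V * B = 1\<^sub>m (2*n-1)"
    using det_non_zero_imp_unit[OF carrier, of "()"] unfolding Units_def ring_mat_def by auto
  then show ?thesis
    using carrier unfolding invertible_mat_def inverts_mat_def square_mat.simps by auto
qed

lemma vlast_range: "k \<in> {1..2*n-1} \<Longrightarrow> 0 \<le> vlast n V k \<and> vlast n V k \<le> M"
  using vlast_eq[of k] excess_range[of k] M_pos by auto

lemma signed_vlast_sum: "(\<Sum>k=1..2*n-1. side_sign n k * vlast n V k) = vcorner n V"
proof -
  have "(\<Sum>k=1..2*n-1. side_sign n k * vlast n V k)
      = (\<Sum>k=1..2*n-1. if k \<le> n then excess n V k else 0)"
    by (intro sum.cong refl) (simp add: vlast_eq side_sign_def)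
  then show ?thesis
    using sum_blocks[of n "\<lambda>k. if k \<le> n then excess n V k else 0"] n_ge_5 vcorner_eq by simp
qed

end

section \<open>The approximate inverse S\<close>

definition residual :: "nat \<Rightarrow> real mat \<Rightarrow> nat \<Rightarrow> nat \<Rightarrow> real" where
  "residual n V j k = (if k = j then 1 else 0) - (\<Sum>t=1..2*n-1. ent V k t * s_ent n V t j)"

context L_matrix
begin

lemma s_ent_sign_form:
  "s_ent n V t j = (if t = j then 1 / ent V j j else 0) + side_sign n t * side_sign n j / vcorner n V"
  by (auto simp: s_ent_def side_sign_def)

(* The diagonal part of S inverts the diagonal of V, and its rank-one part, through the
   signed row sums, produces the column of the numbers v_{2n,k}. *)
lemma residual_eq:
  assumes k: "k \<in> {1..2*n-1}" and j: "j \<in> {1..2*n-1}"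
  shows "residual n V j k
    = (if k = j then 1 else 0) - ent V k j / ent V j j - side_sign n j / vcorner n V * vlast n V k"
proof -
  have "(\<Sum>t=1..2*n-1. ent V k t * s_ent n V t j)
      = (\<Sum>t=1..2*n-1. (if t = j then ent V k j / ent V j j else 0)
                         + side_sign n j / vcorner n V * (side_sign n t * ent V k t))"
    by (intro sum.cong refl) (auto simp: s_ent_sign_form algebra_simps)
  also have "\<dots> = (\<Sum>t=1..2*n-1. if t = j then ent V k j / ent V j j else 0)
      + side_sign n j / vcorner n V * (\<Sum>t=1..2*n-1. side_sign n t * ent V k t)"
    by (simp only: sum.distrib sum_distrib_left)
  also have "\<dots> = ent V k j / ent V j j + side_sign n j / vcorner n V * vlast n V k"
    using j signed_row_sum[OF k] by simp
  finally show ?thesis by (simp add: residual_def)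
qed

lemma residual_bound:
  assumes k: "k \<in> {1..2*n-1}" and j: "j \<in> {1..2*n-1}"
  shows "\<bar>residual n V j k\<bar> \<le> 2 * (M / ((real n - 1) * m))"
proof -
  let ?r = "(real n - 1) * m"
  have r_pos: "0 < ?r" using n_ge_5 m_pos by simp
  have diag_part: "\<bar>(if k = j then 1 else 0) - ent V k j / ent V j j\<bar> \<le> M / ?r"
  proof (cases "k = j")
    case True
    then show ?thesis using diag_pos[OF j] r_pos M_pos by simp
  next
    case False
    have "0 \<le> ent V k j" "ent V k j \<le> M" using offdiag_range[OF k j False] by auto
    then have "0 \<le> ent V k j / ent V j j \<and> ent V k j / ent V j j \<le> M / ?r"
      using diag_lower[OF j] diag_pos[OF j] r_pos by (auto intro: frac_le)
    then show ?thesis using False by (simp add: abs_le_iff del: abs_divide)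
  qed
  have "\<bar>side_sign n j / vcorner n V * vlast n V k\<bar> = vlast n V k / vcorner n V"
    using vlast_range[OF k] vcorner_pos by (simp add: side_sign_def abs_mult)
  also have "\<dots> \<le> M / ?r"
    using vlast_range[OF k] vcorner_lower r_pos by (auto intro: frac_le)
  finally have rank_one_part: "\<bar>side_sign n j / vcorner n V * vlast n V k\<bar> \<le> M / ?r" .
  have "\<bar>residual n V j k\<bar> \<le> \<bar>(if k = j then 1 else 0) - ent V k j / ent V j j\<bar>
      + \<bar>side_sign n j / vcorner n V * vlast n V k\<bar>"
    unfolding residual_eq[OF k j] by (rule abs_triangle_ineq4)
  then show ?thesis using diag_part rank_one_part by linarith
qed

(* The rank-one part of S is exactly what makes the signed sum of the residual small. *)
lemma residual_signed_sum:
  assumes j: "j \<in> {1..2*n-1}"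
  shows "(\<Sum>k=1..2*n-1. side_sign n k * residual n V j k) = - (vlast n V j / ent V j j)"
proof -
  have sym_sum: "(\<Sum>k=1..2*n-1. side_sign n k * ent V k j) = vlast n V j"
    using signed_row_sum[OF j] ent_sym[OF _ j] by (metis (no_types, lifting) sum.cong)
  have delta: "(\<Sum>k=1..2*n-1. side_sign n k * (if k = j then 1 else 0)) = side_sign n j"
    using j by (simp add: if_distrib cong: if_cong)
  have "(\<Sum>k=1..2*n-1. side_sign n k * residual n V j k)
      = (\<Sum>k=1..2*n-1. side_sign n k * (if k = j then 1 else 0)
          - side_sign n k * ent V k j / ent V j j
          - side_sign n j / vcorner n V * (side_sign n k * vlast n V k))"
    using j by (intro sum.cong refl) (simp add: residual_eq algebra_simps)
  also have "\<dots> = (\<Sum>k=1..2*n-1. side_sign n k * (if k = j then 1 else 0))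
        - (\<Sum>k=1..2*n-1. side_sign n k * ent V k j) / ent V j j
        - side_sign n j / vcorner n V * (\<Sum>k=1..2*n-1. side_sign n k * vlast n V k)"
    by (simp only: sum_subtractf sum_divide_distrib sum_distrib_left)
  also have "\<dots> = - (vlast n V j / ent V j j)"
    using delta sym_sum signed_vlast_sum vcorner_pos by simp
  finally show ?thesis .
qed

(* Column j of an inverse W: x = W e_j - S e_j solves V x = residual, so the a priori
   bound gives the entrywise estimate. *)
lemma column_bound:
  assumes VW: "\<And>k. k \<in> {1..2*n-1} \<Longrightarrow> (\<Sum>t=1..2*n-1. ent V k t * ent W t j) = (if k = j then 1 else 0)"
    and j: "j \<in> {1..2*n-1}" and k: "k \<in> {1..2*n-1}"
  shows "\<bar>ent W k j - s_ent n V k j\<bar> \<le> 33 * M^2 / (m^3 * (real n - 1)^2)"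
proof -
  define r where "r = (real n - 1) * m"
  define E where "E = M / r^2"
  have r_pos: "0 < r" using n_ge_5 m_pos unfolding r_def by simp
  have E_nonneg: "0 \<le> E" using M_pos unfolding E_def by simp
  have M_over_r: "M / r = E * r" using r_pos unfolding E_def by (simp add: power2_eq_square)
  have eq: "(\<Sum>t=1..2*n-1. ent V k t * (ent W t j - s_ent n V t j)) = residual n V j k"
    if "k \<in> {1..2*n-1}" for k
    using VW[OF that] by (simp add: residual_def right_diff_distrib sum_subtractf)
  have y: "\<bar>residual n V j k\<bar> \<le> (2 * E) * ent V k k" if k: "k \<in> {1..2*n-1}" for k
  proof -
    have "\<bar>residual n V j k\<bar> \<le> (2 * E) * r"
      using residual_bound[OF k j] M_over_r unfolding r_def by simp
    also have "\<dots> \<le> (2 * E) * ent V k k"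
      using diag_lower[OF k] E_nonneg unfolding r_def by (intro mult_left_mono) auto
    finally show ?thesis .
  qed
  have "\<bar>\<Sum>k=1..2*n-1. side_sign n k * residual n V j k\<bar> = vlast n V j / ent V j j"
    using residual_signed_sum[OF j] vlast_range[OF j] diag_pos[OF j] by simp
  also have "\<dots> \<le> M / r"
    using vlast_range[OF j] diag_lower[OF j] r_pos unfolding r_def by (auto intro: frac_le)
  also have "\<dots> \<le> E * vcorner n V"
    using M_over_r vcorner_lower E_nonneg unfolding r_def by (simp add: mult_left_mono)
  finally have signed_sum: "\<bar>\<Sum>k=1..2*n-1. side_sign n k * residual n V j k\<bar> \<le> E * vcorner n V" .
  have "\<bar>ent W k j - s_ent n V k j\<bar> \<le> E + 2 * E + (4 * (2 * E) + 2 * E) / (m / (3 * M))"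
    using solution_bound[OF eq y signed_sum _ E_nonneg k] E_nonneg by simp
  also have "\<dots> = 3 * E + 30 * E * (M / m)" using m_pos M_pos by (simp add: field_simps)
  also have "\<dots> \<le> 33 * E * (M / m)"
    using E_nonneg m_le_M m_pos mult_left_mono[of 1 "M / m" "3 * E"] by simp
  also have "\<dots> = 33 * M^2 / (m^3 * (real n - 1)^2)"
    unfolding E_def r_def using m_pos by (simp add: field_simps power2_eq_square power3_eq_cube)
  finally show ?thesis .
qed

theorem inverse_bound:
  assumes W: "inverts_mat V W" "inverts_mat W V"
  shows "maxnorm (W - S_mat n V) \<le> 33 * M^2 / (m^3 * (real n - 1)^2)"
proof -
  let ?N = "2*n-1"
  have VW: "V * W = 1\<^sub>m ?N" using W(1) carrier unfolding inverts_mat_def by auto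
  have WV: "W * V = 1\<^sub>m (dim_row W)" using W(2) unfolding inverts_mat_def by auto
  have W_carrier: "W \<in> carrier_mat ?N ?N"
    using arg_cong[OF VW, of dim_col] arg_cong[OF WV, of dim_col] carrier by auto
  have VW_ent: "(\<Sum>t=1..?N. ent V k t * ent W t j) = (if k = j then 1 else 0)"
    if "k \<in> {1..?N}" "j \<in> {1..?N}" for k j
  proof -
    have "ent (V * W) k j = (if k = j then 1 else 0)" using VW that by (auto simp: ent_def)
    then show ?thesis using ent_mult_mat[OF carrier W_carrier that] by simp
  qed
  show ?thesis
  proof (rule maxnorm_le)
    show "0 < dim_row (W - S_mat n V)" "0 < dim_col (W - S_mat n V)"
      using n_ge_5 by (auto simp: S_mat_def)
    fix i j assume "i < dim_row (W - S_mat n V)" "j < dim_col (W - S_mat n V)"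
    then have ij: "i + 1 \<in> {1..?N}" "j + 1 \<in> {1..?N}" by (auto simp: S_mat_def)
    have "(W - S_mat n V) $$ (i, j) = ent W (i + 1) (j + 1) - s_ent n V (i + 1) (j + 1)"
      using ij unfolding S_mat_def ent_def by auto
    then show "\<bar>(W - S_mat n V) $$ (i, j)\<bar> \<le> 33 * M^2 / (m^3 * (real n - 1)^2)"
      using column_bound[OF VW_ent ij(2) ij(1)] ij by simp
  qed
qed

end

(* For n >= 5 both conclusions hold with c1 = 33, whatever the growth of M_n/m_n. *)
theorem proposition1:
  shows "\<exists>c1::real. c1 > 0 \<and>
    (\<forall>(m::nat \<Rightarrow> real) (M::nat \<Rightarrow> real).
       (\<forall>n. 0 < m n \<and> m n \<le> M n) \<and> (\<lambda>n. M n / m n) \<in> o(\<lambda>n. real n) \<longrightarrow>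
       (\<forall>\<^sub>F n in sequentially. \<forall>V. in_L n (m n) (M n) V \<longrightarrow>
          invertible_mat V \<and>
          (\<forall>W. inverts_mat V W \<and> inverts_mat W V \<longrightarrow>
             maxnorm (W - S_mat n V) \<le> c1 * (M n)^2 / ((m n)^3 * (real n - 1)^2))))"
proof (intro exI[of _ 33] conjI allI impI)
  fix m M :: "nat \<Rightarrow> real"
  have "L_matrix n (m n) (M n) V" if "5 \<le> n" "in_L n (m n) (M n) V" for n V
    using that by (simp add: L_matrix_def)
  then show "\<forall>\<^sub>F n in sequentially. \<forall>V. in_L n (m n) (M n) V \<longrightarrow>
      invertible_mat V \<and>
      (\<forall>W. inverts_mat V W \<and> inverts_mat W V \<longrightarrow>
         maxnorm (W - S_mat n V) \<le> 33 * (M n)^2 / ((m n)^3 * (real n - 1)^2))"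
    unfolding eventually_sequentially
    using L_matrix.invertible L_matrix.inverse_bound by blast
qed simp

end
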